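(* Let $k,n\in\mathbb N$. There do not exist uniformly bounded families $\mathcal V_1,\dots,\mathcal V_n$ of subsets of $(k\mathbb Z)^n$, each $2k$-disjoint, such that $\bigcup_{i=1}^n\mathcal V_i$ covers $(k\mathbb Z)^n$.
   Context: $k\mathbb Z=\{kl:l\in\mathbb Z\}$, and $(k\mathbb Z)^n\subset\mathbb Z^n$ carries the sup-metric $d((x_1,\dots,x_n),(y_1,\dots,y_n))=\max_i|x_i-y_i|$. A family $\mathcal A$ of subsets is uniformly bounded if there is $C>0$ with $\operatorname{diam}A\le C$ for all $A\in\mathcal A$; it is $r$-disjoint if $d(A_1,A_2)\ge r$ for all distinct $A_1,A_2\in\mathcal A$. *)

theory Defs
  imports Complex_Main
begin

text \<open>Points of \<open>\<int>^n\<close> are represented as functions \<open>nat \<Rightarrow> int\<close> that vanish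
  outside the coordinates \<open>0..<n\<close>.\<close>

definition kZn :: "int \<Rightarrow> nat \<Rightarrow> (nat \<Rightarrow> int) set" where
  "kZn k n = {x. (\<forall>i<n. k dvd x i) \<and> (\<forall>i\<ge>n. x i = 0)}"

definition supdist :: "nat \<Rightarrow> (nat \<Rightarrow> int) \<Rightarrow> (nat \<Rightarrow> int) \<Rightarrow> int" where
  "supdist n x y = Max (insert 0 ((\<lambda>i. \<bar>x i - y i\<bar>) ` {..<n}))"

definition unif_bounded :: "nat \<Rightarrow> (nat \<Rightarrow> int) set set \<Rightarrow> bool" where
  "unif_bounded n \<V> \<longleftrightarrow> (\<exists>C::real. C > 0 \<and>
      (\<forall>A\<in>\<V>. \<forall>x\<in>A. \<forall>y\<in>A. real_of_int (supdist n x y) \<le> C))"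

definition r_disjoint :: "nat \<Rightarrow> int \<Rightarrow> (nat \<Rightarrow> int) set set \<Rightarrow> bool" where
  "r_disjoint n r \<V> \<longleftrightarrow> (\<forall>A1\<in>\<V>. \<forall>A2\<in>\<V>. A1 \<noteq> A2 \<longrightarrow>
      (\<forall>x\<in>A1. \<forall>y\<in>A2. supdist n x y \<ge> r))"

end

theory Submission
  imports Defs "HOL-Analysis.Analysis"
begin

text \<open>Scale the grid \<open>{0..p}^n\<close> by \<open>k\<close> into \<open>(k\<int>)^n\<close>. Colour each grid point \<open>x\<close> by a
  family \<open>c\<close> having a member that contains \<open>k x\<close>, and record whether that member meets the slab
  \<open>y\<^sub>c \<le> k\<close>. Adjacent grid points are at distance \<open>k < 2k\<close>, so when they share a colour they
  lie in the same member and get the same record; points near the face \<open>x\<^sub>c = 0\<close> are recorded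
  \<open>True\<close>, and, once \<open>k(p - 2)\<close> exceeds the uniform bound, points near \<open>x\<^sub>c = p\<close> are
  recorded \<open>False\<close>. Kuhn's combinatorial form of Sperner's lemma rules such a colouring out:
  it is a discrete Lebesgue covering theorem.\<close>

lemma kuhn_fully_labelled_simplex:
  fixes p n :: nat and lab :: "(nat \<Rightarrow> nat) \<Rightarrow> nat \<Rightarrow> nat"
  assumes "0 < p"
    and "\<And>x j. \<forall>j. x j \<le> p \<Longrightarrow> j < n \<Longrightarrow> x j = 0 \<Longrightarrow> lab x j = 0"
    and "\<And>x j. \<forall>j. x j \<le> p \<Longrightarrow> j < n \<Longrightarrow> x j = p \<Longrightarrow> lab x j = 1"
  obtains b u s where "kuhn_simplex p n b u s" and "(reduced n \<circ> lab) ` s = {..n}"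
proof -
  have "odd (card {s. ksimplex p n s \<and> (reduced n \<circ> lab) ` s = {..n}})"
    using assms by (intro kuhn_combinatorial) auto
  then have "{s. ksimplex p n s \<and> (reduced n \<circ> lab) ` s = {..n}} \<noteq> {}"
    by (rule odd_card_imp_not_empty)
  then show thesis
    using that by (auto elim: ksimplex.cases)
qed

lemma kuhn_simplex_vertices_adjacent:
  assumes "kuhn_simplex p n b u s" and "x \<in> s" and "y \<in> s"
  shows "x j \<le> Suc (y j)"
  using kuhn_simplex.le_Suc_base[OF assms(1,2)] kuhn_simplex.base_le[OF assms(1,3)]
  by (meson Suc_le_mono order_trans)

lemma discrete_lebesgue_covering:
  fixes p n :: nat and col :: "(nat \<Rightarrow> nat) \<Rightarrow> nat" and side :: "(nat \<Rightarrow> nat) \<Rightarrow> bool"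
  assumes "0 < p"
    and col: "\<And>x. \<forall>j. x j \<le> p \<Longrightarrow> col x < n"
    and low: "\<And>x. \<forall>j. x j \<le> p \<Longrightarrow> x (col x) \<le> 1 \<Longrightarrow> side x"
    and high: "\<And>x. \<forall>j. x j \<le> p \<Longrightarrow> p \<le> Suc (x (col x)) \<Longrightarrow> \<not> side x"
    and adjacent: "\<And>x y. \<forall>j. x j \<le> p \<Longrightarrow> \<forall>j. y j \<le> p \<Longrightarrow>
      \<forall>j. x j \<le> Suc (y j) \<and> y j \<le> Suc (x j) \<Longrightarrow> col x = col y \<Longrightarrow> side x = side y"
  shows False
proof -
  define lab where "lab x j = (if x j = p \<or> (col x = j \<and> \<not> side x) then 1 else 0 :: nat)" for x j
  obtain b u s where s: "kuhn_simplex p n b u s" and full: "(reduced n \<circ> lab) ` s = {..n}"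
  proof (rule kuhn_fully_labelled_simplex[of p n lab])
    show "lab x j = 0" if "\<forall>j. x j \<le> p" "j < n" "x j = 0" for x j
      using low[OF that(1)] that \<open>0 < p\<close> by (auto simp: lab_def)
  qed (use \<open>0 < p\<close> in \<open>auto simp: lab_def\<close>)
  have grid: "\<forall>j. x j \<le> p" if "x \<in> s" for x
    using kuhn_simplex.s_le_p[OF s that] by blast
  have adj: "\<forall>j. x j \<le> Suc (y j) \<and> y j \<le> Suc (x j)" if "x \<in> s" "y \<in> s" for x y
    using kuhn_simplex_vertices_adjacent[OF s] that by blast
  txt \<open>The vertex with reduced label \<open>n\<close> has all labels \<open>0\<close>; the one with reduced label
    its colour \<open>c\<close> has label \<open>1\<close> at \<open>c\<close>, and being adjacent it cannot lie on \<open>x\<^sub>c = p\<close>.\<close>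
  obtain v where v: "v \<in> s" "reduced n (lab v) = n"
    using full by (metis atMost_iff comp_apply imageE order_refl)
  define c where "c = col v"
  have "c < n" using col grid v unfolding c_def by blast
  have "\<forall>i<n. lab v i = 0"
    using reduced_labelling(2)[of n "lab v"] v by simp
  then have "side v" and "v c \<noteq> p"
    using \<open>c < n\<close> unfolding lab_def c_def by (auto split: if_splits)
  then have "Suc (v c) < p"
    using high[OF grid[OF v(1)]] unfolding c_def by force
  obtain w where w: "w \<in> s" "reduced n (lab w) = c"
    using full \<open>c < n\<close> by (metis atMost_iff comp_apply imageE less_imp_le)
  have "lab w c \<noteq> 0"
    using reduced_labelling(3)[of n "lab w"] w \<open>c < n\<close> by simp
  moreover have "w c \<noteq> p"
    using adj[OF w(1) v(1)] \<open>Suc (v c) < p\<close> by (metis Suc_le_mono not_less)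
  ultimately have "col w = c" and "\<not> side w"
    unfolding lab_def by (auto split: if_splits)
  with adjacent[OF grid[OF w(1)] grid[OF v(1)] adj[OF w(1) v(1)]] \<open>side v\<close> show False
    unfolding c_def by simp
qed

lemma supdist_le:
  assumes "0 \<le> B" and "\<And>i. i < n \<Longrightarrow> \<bar>x i - y i\<bar> \<le> B"
  shows "supdist n x y \<le> B"
  using assms unfolding supdist_def by (auto simp: Max_le_iff)

lemma abs_le_supdist:
  assumes "i < n"
  shows "\<bar>x i - y i\<bar> \<le> supdist n x y"
  using assms unfolding supdist_def by (intro Max_ge) auto

lemma unif_bounded_empty: "unif_bounded n {}"
  unfolding unif_bounded_def by (auto intro: exI[of _ 1])

lemma unif_bounded_Un:
  assumes "unif_bounded n \<U>" and "unif_bounded n \<V>"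
  shows "unif_bounded n (\<U> \<union> \<V>)"
proof -
  obtain C D :: real where "C > 0" "D > 0"
    and "\<forall>A\<in>\<U>. \<forall>x\<in>A. \<forall>y\<in>A. real_of_int (supdist n x y) \<le> C"
    and "\<forall>A\<in>\<V>. \<forall>x\<in>A. \<forall>y\<in>A. real_of_int (supdist n x y) \<le> D"
    using assms unfolding unif_bounded_def by blast
  then show ?thesis
    unfolding unif_bounded_def
    by (intro exI[of _ "max C D"]) (auto intro: le_max_iff_disj[THEN iffD2])
qed

lemma unif_bounded_UN:
  assumes "finite I" and "\<And>i. i \<in> I \<Longrightarrow> unif_bounded n (\<V> i)"
  shows "unif_bounded n (\<Union>i\<in>I. \<V> i)"
  using assms
  by (induction I rule: finite_induct) (auto intro: unif_bounded_empty unif_bounded_Un)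

lemma r_disjoint_eq_if_supdist_less:
  assumes "r_disjoint n r \<V>" and "A \<in> \<V>" "B \<in> \<V>" and "x \<in> A" "y \<in> B"
    and "supdist n x y < r"
  shows "A = B"
  using assms unfolding r_disjoint_def by force

definition scaled_grid :: "int \<Rightarrow> nat \<Rightarrow> (nat \<Rightarrow> nat) \<Rightarrow> nat \<Rightarrow> int" where
  "scaled_grid k n x = (\<lambda>i. if i < n then k * int (x i) else 0)"

lemma scaled_grid_in_kZn: "scaled_grid k n x \<in> kZn k n"
  unfolding scaled_grid_def kZn_def by auto

lemma supdist_scaled_grid_le:
  assumes "0 \<le> k" and "\<forall>j. x j \<le> Suc (y j) \<and> y j \<le> Suc (x j)"
  shows "supdist n (scaled_grid k n x) (scaled_grid k n y) \<le> k"
proof (rule supdist_le)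
  fix j assume "j < n"
  have "\<bar>int (x j) - int (y j)\<bar> \<le> 1"
    using assms(2) by (metis abs_le_iff diff_le_eq minus_diff_eq of_nat_Suc add.commute of_nat_le_iff)
  then have "k * \<bar>int (x j) - int (y j)\<bar> \<le> k * 1"
    using assms(1) by (intro mult_left_mono) auto
  then show "\<bar>scaled_grid k n x j - scaled_grid k n y j\<bar> \<le> k"
    using \<open>j < n\<close> \<open>0 \<le> k\<close> by (simp add: scaled_grid_def abs_mult right_diff_distrib[symmetric])
qed fact

lemma kZn_not_covered_by_disjoint_families:
  fixes k n :: nat and \<V> :: "nat \<Rightarrow> (nat \<Rightarrow> int) set set"
  assumes "k \<ge> 1"
    and bounded: "unif_bounded n (\<Union>i<n. \<V> i)"
    and disjoint: "\<And>i. i < n \<Longrightarrow> r_disjoint n (2 * int k) (\<V> i)"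
    and cover: "kZn (int k) n \<subseteq> (\<Union>i<n. \<Union>(\<V> i))"
  shows False
proof -
  obtain C :: real where "C > 0"
    and diam: "\<And>A x y. A \<in> (\<Union>i<n. \<V> i) \<Longrightarrow> x \<in> A \<Longrightarrow> y \<in> A \<Longrightarrow> supdist n x y \<le> C"
    using bounded unfolding unif_bounded_def by blast
  define p where "p = nat \<lceil>C\<rceil> + 3"
  define pt where "pt = scaled_grid (int k) n"
  have "\<forall>x. \<exists>i A. i < n \<and> A \<in> \<V> i \<and> pt x \<in> A"
    using cover scaled_grid_in_kZn unfolding pt_def by blast
  then obtain col A where col: "\<And>x. col x < n" and A: "\<And>x. A x \<in> \<V> (col x)" "\<And>x. pt x \<in> A x"
    by metis
  define side where "side x \<longleftrightarrow> (\<exists>y\<in>A x. y (col x) \<le> int k)" for x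
  show False
  proof (rule discrete_lebesgue_covering[of p col n side])
    show "0 < p" "col x < n" for x
      using col unfolding p_def by auto
    show "side x" if "x (col x) \<le> 1" for x
    proof -
      have "int k * int (x (col x)) \<le> int k * 1"
        using that by (intro mult_left_mono) auto
      then show ?thesis
        using A(2)[of x] col[of x] unfolding side_def
        by (intro bexI[of _ "pt x"]) (auto simp: pt_def scaled_grid_def)
    qed
    show "\<not> side x" if "p \<le> Suc (x (col x))" for x
    proof
      assume "side x"
      then obtain y where "y \<in> A x" and "y (col x) \<le> int k"
        unfolding side_def by blast
      have "supdist n y (pt x) \<le> C"
        using diam A \<open>y \<in> A x\<close> col by blast
      moreover have "int k * (int p - 2) \<le> pt x (col x) - y (col x)"
      proof -
        have "int k * (int p - 2) \<le> int k * (int (x (col x)) - 1)"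
          using that by (intro mult_left_mono) auto
        then show ?thesis
          using \<open>y (col x) \<le> int k\<close> col by (simp add: pt_def scaled_grid_def algebra_simps)
      qed
      moreover have "int p - 2 \<le> int k * (int p - 2)"
        using mult_right_mono[of 1 "int k" "int p - 2"] \<open>k \<ge> 1\<close> unfolding p_def by simp
      moreover have "pt x (col x) - y (col x) \<le> supdist n y (pt x)"
        using abs_le_supdist[OF col[of x], where x = y and y = "pt x"] by linarith
      ultimately have "int p - 2 \<le> C"
        by linarith
      then show False
        unfolding p_def using \<open>C > 0\<close> by linarith
    qed
    show "side x = side y" if "\<forall>j. x j \<le> Suc (y j) \<and> y j \<le> Suc (x j)" "col x = col y" for x y
    proof -
      have "supdist n (pt x) (pt y) < 2 * int k"
        using supdist_scaled_grid_le[OF _ that(1), of "int k" n] \<open>k \<ge> 1\<close> unfolding pt_def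
        by linarith
      then have "A x = A y"
        using r_disjoint_eq_if_supdist_less[OF disjoint[OF col] A(1) _ A(2) A(2)] that(2)
        by (metis A(1))
      then show ?thesis
        unfolding side_def using that(2) by simp
    qed
  qed
qed

theorem lemma3:
  fixes k n :: nat
  assumes "k \<ge> 1" and "n \<ge> 1"
  shows "\<not> (\<exists>\<V> :: nat \<Rightarrow> (nat \<Rightarrow> int) set set.
            (\<forall>i\<in>{1..n}. (\<forall>A\<in>\<V> i. A \<subseteq> kZn (int k) n)
                         \<and> unif_bounded n (\<V> i)
                         \<and> r_disjoint n (2 * int k) (\<V> i))
          \<and> kZn (int k) n \<subseteq> (\<Union>i\<in>{1..n}. \<Union>(\<V> i)))"
proof
  assume "\<exists>\<V> :: nat \<Rightarrow> (nat \<Rightarrow> int) set set.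
            (\<forall>i\<in>{1..n}. (\<forall>A\<in>\<V> i. A \<subseteq> kZn (int k) n)
                         \<and> unif_bounded n (\<V> i)
                         \<and> r_disjoint n (2 * int k) (\<V> i))
          \<and> kZn (int k) n \<subseteq> (\<Union>i\<in>{1..n}. \<Union>(\<V> i))"
  then obtain \<V> :: "nat \<Rightarrow> (nat \<Rightarrow> int) set set"
    where families: "\<forall>i\<in>{1..n}. unif_bounded n (\<V> i) \<and> r_disjoint n (2 * int k) (\<V> i)"
      and cover: "kZn (int k) n \<subseteq> (\<Union>i\<in>{1..n}. \<Union>(\<V> i))"
    by meson
  have Suc_range: "{1..n} = Suc ` {..<n}"
    by (simp add: lessThan_atLeast0 atLeastLessThanSuc_atLeastAtMost)
  show False
  proof (rule kZn_not_covered_by_disjoint_families[OF \<open>k \<ge> 1\<close>, of n "\<lambda>i. \<V> (Suc i)"])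
    show "unif_bounded n (\<Union>i<n. \<V> (Suc i))"
      using families by (intro unif_bounded_UN) auto
    show "r_disjoint n (2 * int k) (\<V> (Suc i))" if "i < n" for i
      using families that by auto
    show "kZn (int k) n \<subseteq> (\<Union>i<n. \<Union>(\<V> (Suc i)))"
      using cover unfolding Suc_range by auto
  qed
qed

end
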